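(* Let $1<\beta<\gamma<p^-$ and, for $\lambda>0$, let $I_\lambda:E\to\mathbb{R}$, $I_\lambda(u)=\int_\Omega A(x,\nabla u)\,dx-\frac{\lambda}{\gamma}\int_\Omega u_+^\gamma\,dx+\frac{\lambda}{\beta}\int_\Omega u_+^\beta\,dx$ with $u_+=\max\{u,0\}$. There exists $\lambda^\star>0$ such that $\inf_E I_\lambda<0$ for all $\lambda\geq\lambda^\star$.
   Context: Standing setting: $\Omega\subset\mathbb{R}^N$ ($N\geq3$) is a bounded domain with smooth boundary; $p\in C^{0,\alpha}(\overline\Omega)$, $\alpha\in(0,1)$, $p(x)>1$ on $\overline\Omega$; $p^+=\sup_\Omega p$, $p^-=\inf_\Omega p$. $L^{p(x)}(\Omega)$ is the space of measurable $u$ with $\int_\Omega|u|^{p(x)}dx<\infty$, normed by $|u|_{p(x)}=\inf\{\mu>0:\int_\Omega|u/\mu|^{p(x)}dx\leq1\}$; $E=W_0^{1,p(x)}(\Omega)$ is the closure of $C_0^\infty(\Omega)$ under $\|u\|=|\nabla u|_{p(x)}$. $A:\overline\Omega\times\mathbb{R}^N\to\mathbb{R}$ has continuous derivative $a(x,\xi)=\frac{d}{d\xi}A(x,\xi)$ and satisfies: (A1) $A(x,0)=0$; (A2) $|a(x,\xi)|\leq c_1(1+|\xi|^{p(x)-1})$ for some $c_1>0$; (A3) $(a(x,\xi)-a(x,\psi))\cdot(\xi-\psi)\geq0$ with equality iff $\xi=\psi$; (A4) $A(x,\frac{\xi+\psi}2)\leq\frac12A(x,\xi)+\frac12A(x,\psi)-k|\xi-\psi|^{p(x)}$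 for some $k>0$; (A5) $|\xi|^{p(x)}\leq a(x,\xi)\cdot\xi\leq p(x)A(x,\xi)$; all for every $x\in\overline\Omega$, $\xi,\psi\in\mathbb{R}^N$. *)

theory Defs
  imports "HOL-Analysis.Analysis"
begin

primrec dpart :: "'a::euclidean_space list \<Rightarrow> ('a \<Rightarrow> real) \<Rightarrow> 'a \<Rightarrow> real" where
  "dpart [] f = f"
| "dpart (d # ds) f = (\<lambda>x. frechet_derivative (dpart ds f) (at x) d)"

definition smooth_on :: "'a::euclidean_space set \<Rightarrow> ('a \<Rightarrow> real) \<Rightarrow> bool" where
  "smooth_on S f \<longleftrightarrow> open S \<and>
     (\<forall>ds. set ds \<subseteq> Basis \<longrightarrow> (\<forall>x\<in>S. dpart ds f differentiable (at x)))"

definition grad :: "('a::euclidean_space \<Rightarrow> real) \<Rightarrow> 'a \<Rightarrow> 'a" where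
  "grad f x = (\<Sum>i\<in>Basis. frechet_derivative f (at x) i *\<^sub>R i)"

text \<open>Test functions C_c^infinity(Omega) (extended by zero to the whole space).\<close>
definition test_fun :: "'a::euclidean_space set \<Rightarrow> ('a \<Rightarrow> real) \<Rightarrow> bool" where
  "test_fun \<Omega> \<phi> \<longleftrightarrow> smooth_on UNIV \<phi> \<and>
     compact (closure {x. \<phi> x \<noteq> 0}) \<and> closure {x. \<phi> x \<noteq> 0} \<subseteq> \<Omega>"

definition smooth_bounded_domain :: "'a::euclidean_space set \<Rightarrow> bool" where
  "smooth_bounded_domain \<Omega> \<longleftrightarrow> \<Omega> \<noteq> {} \<and> open \<Omega> \<and> bounded \<Omega> \<and> connected \<Omega> \<and>
     (\<forall>z\<in>frontier \<Omega>. \<exists>r>0. \<exists>\<psi>. smooth_on (ball z r) \<psi> \<and>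
        (\<forall>x\<in>ball z r. grad \<psi> x \<noteq> 0) \<and>
        \<Omega> \<inter> ball z r = {x\<in>ball z r. \<psi> x < 0})"

definition modular :: "('a::euclidean_space \<Rightarrow> real) \<Rightarrow> 'a set \<Rightarrow> ('a \<Rightarrow> real) \<Rightarrow> ennreal" where
  "modular p \<Omega> u = (\<integral>\<^sup>+ x\<in>\<Omega>. ennreal (\<bar>u x\<bar> powr p x) \<partial>lebesgue)"

definition in_Lp :: "('a::euclidean_space \<Rightarrow> real) \<Rightarrow> 'a set \<Rightarrow> ('a \<Rightarrow> real) \<Rightarrow> bool" where
  "in_Lp p \<Omega> u \<longleftrightarrow> u \<in> borel_measurable lebesgue \<and> modular p \<Omega> u < \<infinity>"

definition lux_norm :: "('a::euclidean_space \<Rightarrow> real) \<Rightarrow> 'a set \<Rightarrow> ('a \<Rightarrow> real) \<Rightarrow> real" where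
  "lux_norm p \<Omega> u = Inf {\<mu>. \<mu> > 0 \<and> modular p \<Omega> (\<lambda>x. u x / \<mu>) \<le> 1}"

text \<open>in_E p Omega u g: u belongs to the closure of C_c^infinity(Omega) in W^{1,p(x)}, with
  (weak) gradient g; i.e. there are test functions phi_k with phi_k -> u and
  grad phi_k -> g in L^{p(x)}(Omega).\<close>
definition in_E :: "('a::euclidean_space \<Rightarrow> real) \<Rightarrow> 'a set \<Rightarrow> ('a \<Rightarrow> real) \<Rightarrow> ('a \<Rightarrow> 'a) \<Rightarrow> bool" where
  "in_E p \<Omega> u g \<longleftrightarrow> in_Lp p \<Omega> u \<and> g \<in> borel_measurable lebesgue \<and>
     in_Lp p \<Omega> (\<lambda>x. norm (g x)) \<and>
     (\<exists>\<phi>::nat \<Rightarrow> 'a \<Rightarrow> real. (\<forall>k. test_fun \<Omega> (\<phi> k)) \<and>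
        (\<lambda>k. lux_norm p \<Omega> (\<lambda>x. \<phi> k x - u x)) \<longlonglongrightarrow> 0 \<and>
        (\<lambda>k. lux_norm p \<Omega> (\<lambda>x. norm (grad (\<phi> k) x - g x))) \<longlonglongrightarrow> 0)"

definition I_fun :: "('a::euclidean_space \<Rightarrow> 'a \<Rightarrow> real) \<Rightarrow> 'a set \<Rightarrow> real \<Rightarrow> real \<Rightarrow> real
    \<Rightarrow> ('a \<Rightarrow> real) \<Rightarrow> ('a \<Rightarrow> 'a) \<Rightarrow> real" where
  "I_fun A \<Omega> \<beta> \<gamma> lam u g =
     (LINT x:\<Omega>|lebesgue. A x (g x))
     - lam / \<gamma> * (LINT x:\<Omega>|lebesgue. (max (u x) 0) powr \<gamma>)
     + lam / \<beta> * (LINT x:\<Omega>|lebesgue. (max (u x) 0) powr \<beta>)"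

end

theory Submission
  imports Defs "HOL-Computational_Algebra.Polynomial"
begin

text \<open>For a fixed pair (u, g) the functional is affine in lambda:
  I(u) = \<integral>A(x, g) - lambda D(u) with D(u) = \<integral>u_+^gamma / gamma - \<integral>u_+^beta / beta.
  Hence it suffices to find one u in E with D(u) > 0. Take u = t phi for a smooth bump phi \<ge> 0
  supported in a ball inside Omega; then D(t phi) = t^gamma J(gamma) / gamma - t^beta J(beta) / beta
  with J(s) = \<integral>phi^s > 0, which is positive for large t since gamma > beta.\<close>

section \<open>Elementary smooth functions\<close>

inductive elementary_smooth :: "('a::euclidean_space \<Rightarrow> real) \<Rightarrow> bool" where
  const: "elementary_smooth (\<lambda>x. c)"
| inner: "elementary_smooth (\<lambda>x. x \<bullet> b)"
| inner_self: "elementary_smooth (\<lambda>x. x \<bullet> x)"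
| add: "elementary_smooth f \<Longrightarrow> elementary_smooth g \<Longrightarrow> elementary_smooth (\<lambda>x. f x + g x)"
| mult: "elementary_smooth f \<Longrightarrow> elementary_smooth g \<Longrightarrow> elementary_smooth (\<lambda>x. f x * g x)"
| compose: "(\<And>m y. (h m has_real_derivative h (Suc m) y) (at y)) \<Longrightarrow> elementary_smooth f \<Longrightarrow>
    elementary_smooth (\<lambda>x. h n (f x))"
\<comment> \<open>h is a tower of successive derivatives of h 0; allowing every h n keeps the class closed
  under directional derivatives.\<close>

lemma elementary_smooth_has_derivative:
  assumes "elementary_smooth f"
  shows "\<exists>F. (\<forall>x. (f has_derivative F x) (at x)) \<and> (\<forall>d. elementary_smooth (\<lambda>x. F x d))"
  using assms
proof induction
  case (const c)
  show ?case by (rule exI[of _ "\<lambda>x h. 0"]) (auto intro: elementary_smooth.const)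
next
  case (inner b)
  show ?case
    by (rule exI[of _ "\<lambda>x h. h \<bullet> b"]) (auto intro!: derivative_eq_intros elementary_smooth.const)
next
  case inner_self
  have "elementary_smooth (\<lambda>x. x \<bullet> d + d \<bullet> x)" for d :: 'a
    unfolding inner_commute[of d] by (intro elementary_smooth.add elementary_smooth.inner)
  then show ?case
    by (intro exI[of _ "\<lambda>x h. x \<bullet> h + h \<bullet> x"]) (auto intro!: derivative_eq_intros)
next
  case (add f g)
  then obtain F G where F: "\<forall>x. (f has_derivative F x) (at x)" "\<forall>d. elementary_smooth (\<lambda>x. F x d)"
    and G: "\<forall>x. (g has_derivative G x) (at x)" "\<forall>d. elementary_smooth (\<lambda>x. G x d)" by blast
  show ?case
    by (rule exI[of _ "\<lambda>x h. F x h + G x h"])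
      (use F G in \<open>auto intro!: has_derivative_add elementary_smooth.add\<close>)
next
  case (mult f g)
  then obtain F G where F: "\<forall>x. (f has_derivative F x) (at x)" "\<forall>d. elementary_smooth (\<lambda>x. F x d)"
    and G: "\<forall>x. (g has_derivative G x) (at x)" "\<forall>d. elementary_smooth (\<lambda>x. G x d)" by blast
  show ?case
    by (rule exI[of _ "\<lambda>x h. f x * G x h + F x h * g x"])
      (use F G mult in \<open>auto intro!: has_derivative_mult elementary_smooth.add elementary_smooth.mult\<close>)
next
  case (compose h f n)
  then obtain F where F: "\<forall>x. (f has_derivative F x) (at x)" "\<forall>d. elementary_smooth (\<lambda>x. F x d)"
    by blast
  have "((\<lambda>x. h n (f x)) has_derivative (\<lambda>d. h (Suc n) (f x) * F x d)) (at x)" for x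
    using has_derivative_compose[OF F(1)[rule_format] compose(1)[unfolded has_field_derivative_def]]
    by blast
  moreover have "elementary_smooth (\<lambda>x. h (Suc n) (f x) * F x d)" for d
    by (rule elementary_smooth.mult[OF elementary_smooth.compose[where h=h and n="Suc n", OF compose(1,2)]
          F(2)[rule_format]])
  ultimately show ?case
    by (intro exI[of _ "\<lambda>x d. h (Suc n) (f x) * F x d"]) simp
qed

lemma elementary_smooth_differentiable: "elementary_smooth f \<Longrightarrow> f differentiable (at x)"
  using elementary_smooth_has_derivative unfolding differentiable_def by blast

lemma elementary_smooth_frechet_derivative:
  assumes "elementary_smooth f"
  shows "elementary_smooth (\<lambda>x. frechet_derivative f (at x) d)"
proof -
  obtain F where F: "\<forall>x. (f has_derivative F x) (at x)" "\<forall>d. elementary_smooth (\<lambda>x. F x d)"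
    using elementary_smooth_has_derivative[OF assms] by blast
  have "(\<lambda>x. frechet_derivative f (at x) d) = (\<lambda>x. F x d)"
    using F(1) frechet_derivative_at by metis
  then show ?thesis using F(2) by simp
qed

lemma elementary_smooth_imp_smooth_on:
  assumes "elementary_smooth f"
  shows "smooth_on UNIV f"
proof -
  have "elementary_smooth (dpart ds f)" for ds
    by (induction ds) (auto intro: elementary_smooth_frechet_derivative assms)
  then show ?thesis unfolding smooth_on_def using elementary_smooth_differentiable by blast
qed

lemma smooth_on_UNIV_continuous_on_dpart:
  "smooth_on UNIV f \<Longrightarrow> set ds \<subseteq> Basis \<Longrightarrow> continuous_on UNIV (dpart ds f)"
  unfolding smooth_on_def
  by (meson continuous_at_imp_continuous_on differentiable_imp_continuous_within UNIV_I)

lemma smooth_on_UNIV_continuous_on: "smooth_on UNIV f \<Longrightarrow> continuous_on UNIV f"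
  using smooth_on_UNIV_continuous_on_dpart[of f "[]"] by simp

lemma smooth_on_UNIV_continuous_on_grad:
  assumes "smooth_on UNIV f"
  shows "continuous_on UNIV (grad f)"
proof -
  have "continuous_on UNIV (\<lambda>x. frechet_derivative f (at x) i)" if "i \<in> Basis" for i
    using smooth_on_UNIV_continuous_on_dpart[OF assms, of "[i]"] that by simp
  then show ?thesis
    unfolding grad_def[abs_def] by (intro continuous_intros)
qed

lemma continuous_on_imp_borel_measurable_lebesgue:
  fixes f :: "'a::euclidean_space \<Rightarrow> 'b::euclidean_space"
  shows "continuous_on UNIV f \<Longrightarrow> f \<in> borel_measurable lebesgue"
  by (rule measurable_on_imp_borel_measurable_lebesgue_UNIV[OF continuous_imp_measurable_on])

section \<open>A smooth bump function\<close>

primrec bump_poly :: "nat \<Rightarrow> real poly" where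
  "bump_poly 0 = 1"
| "bump_poly (Suc n) = [:0, 0, 1:] * (bump_poly n - pderiv (bump_poly n))"

text \<open>The n-th derivative of s \<mapsto> exp(-1/s) (extended by 0 for s \<le> 0) is
  P_n(1/s) exp(-1/s), whence the recursion P_(n+1)(z) = z^2 (P_n(z) - P_n'(z)).\<close>
definition bump_tower :: "nat \<Rightarrow> real \<Rightarrow> real" where
  "bump_tower n s = (if s > 0 then poly (bump_poly n) (inverse s) * exp (- inverse s) else 0)"

lemma poly_times_exp_minus_tendsto_0:
  "((\<lambda>z::real. poly Q z * exp (- z)) \<longlongrightarrow> 0) at_top"
proof -
  have "((\<lambda>z. \<Sum>i\<le>degree Q. coeff Q i * (z ^ i / exp z)) \<longlongrightarrow> (\<Sum>i\<le>degree Q. coeff Q i * 0)) at_top"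
    by (intro tendsto_sum tendsto_mult tendsto_const tendsto_power_div_exp_0)
  moreover have "(\<lambda>z. \<Sum>i\<le>degree Q. coeff Q i * (z ^ i / exp z)) = (\<lambda>z. poly Q z * exp (- z))"
    by (auto simp: poly_altdef sum_divide_distrib exp_minus field_simps)
  ultimately show ?thesis by simp
qed

lemma bump_tower_has_real_derivative:
  "(bump_tower n has_real_derivative bump_tower (Suc n) y) (at y)"
proof (cases y "0::real" rule: linorder_cases)
  case less
  have "((\<lambda>s. 0) has_real_derivative 0) (at y)" by simp
  then have "(bump_tower n has_real_derivative 0) (at y)"
    by (rule has_field_derivative_transform_within_open[where S="{..<0}"])
      (use less in \<open>auto simp: bump_tower_def\<close>)
  then show ?thesis using less by (simp add: bump_tower_def)
next
  case greater
  let ?P = "bump_poly n"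
  have "((\<lambda>s. poly ?P (inverse s) * exp (- inverse s)) has_real_derivative
     poly (pderiv ?P) (inverse y) * (- inverse (y\<^sup>2)) * exp (- inverse y)
     + poly ?P (inverse y) * (exp (- inverse y) * inverse (y\<^sup>2))) (at y)"
    using greater
    by (auto intro!: derivative_eq_intros DERIV_chain2[OF poly_DERIV] simp: power2_eq_square)
  also have "poly (pderiv ?P) (inverse y) * (- inverse (y\<^sup>2)) * exp (- inverse y)
     + poly ?P (inverse y) * (exp (- inverse y) * inverse (y\<^sup>2)) = bump_tower (Suc n) y"
    using greater by (simp add: bump_tower_def algebra_simps power2_eq_square)
  finally show ?thesis
    by (rule has_field_derivative_transform_within_open[where S="{0<..}"])
      (use greater in \<open>auto simp: bump_tower_def\<close>)
next
  case equal
  have "((\<lambda>z. poly ([:0, 1:] * bump_poly n) z * exp (- z)) \<longlongrightarrow> 0) at_top"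
    by (rule poly_times_exp_minus_tendsto_0)
  then have "((\<lambda>s. poly ([:0, 1:] * bump_poly n) (inverse s) * exp (- inverse s)) \<longlongrightarrow> 0) (at_right 0)"
    using filterlim_compose[OF _ filterlim_inverse_at_top_right] by blast
  moreover have "\<forall>\<^sub>F s in at_right 0.
      poly ([:0, 1:] * bump_poly n) (inverse s) * exp (- inverse s) = bump_tower n s / s"
    by (auto simp: bump_tower_def field_simps intro!: eventually_at_rightI[where b=1])
  ultimately have right: "((\<lambda>s. bump_tower n s / s) \<longlongrightarrow> 0) (at_right 0)"
    by (rule Lim_transform_eventually)
  have "\<forall>\<^sub>F s in at_left (0::real). 0 = bump_tower n s / s"
    by (auto simp: bump_tower_def intro!: eventually_at_leftI[where a="-1"])
  then have left: "((\<lambda>s. bump_tower n s / s) \<longlongrightarrow> 0) (at_left 0)"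
    by (rule Lim_transform_eventually[OF tendsto_const])
  have "(bump_tower n has_real_derivative 0) (at 0)"
    using filterlim_split_at[OF left right] by (simp add: has_field_derivative_iff bump_tower_def)
  then show ?thesis using equal by (simp add: bump_tower_def)
qed

definition bump :: "'a::euclidean_space \<Rightarrow> real \<Rightarrow> 'a \<Rightarrow> real" where
  "bump c r x = bump_tower 0 (r\<^sup>2 - (x - c) \<bullet> (x - c))"

lemma bump_eq:
  assumes "0 < r"
  shows "bump c r x = (if x \<in> ball c r then exp (- inverse (r\<^sup>2 - (x - c) \<bullet> (x - c))) else 0)"
proof -
  have "(x - c) \<bullet> (x - c) = (dist x c)\<^sup>2"
    by (simp add: dist_norm power2_norm_eq_inner)
  then have "0 < r\<^sup>2 - (x - c) \<bullet> (x - c) \<longleftrightarrow> dist x c < r"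
    using assms zero_le_dist[of x c] power_less_imp_less_base[of "dist x c" 2 r]
      power_strict_mono[of "dist x c" r 2] by auto
  then show ?thesis by (simp add: bump_def bump_tower_def dist_commute)
qed

lemma bump_nonneg: "0 \<le> bump c r x"
  by (simp add: bump_def bump_tower_def)

lemma bump_le_one: "bump c r x \<le> 1"
  by (simp add: bump_def bump_tower_def)

lemma bump_ge_on_half_ball:
  assumes "0 < r" "x \<in> ball c (r / 2)"
  shows "exp (- inverse (3 / 4 * r\<^sup>2)) \<le> bump c r x"
proof -
  have "(x - c) \<bullet> (x - c) = (dist x c)\<^sup>2"
    by (simp add: dist_norm power2_norm_eq_inner)
  also have "\<dots> < (r / 2)\<^sup>2"
    using assms by (intro power_strict_mono) (auto simp: dist_commute)
  finally have "3 / 4 * r\<^sup>2 < r\<^sup>2 - (x - c) \<bullet> (x - c)"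
    by (simp add: power_divide)
  then have "inverse (r\<^sup>2 - (x - c) \<bullet> (x - c)) \<le> inverse (3 / 4 * r\<^sup>2)"
    using assms(1) by (intro le_imp_inverse_le) auto
  then have "exp (- inverse (3 / 4 * r\<^sup>2)) \<le> exp (- inverse (r\<^sup>2 - (x - c) \<bullet> (x - c)))"
    by simp
  moreover have "x \<in> ball c r"
    using assms by auto
  ultimately show ?thesis
    by (simp only: bump_eq[OF assms(1)] if_True)
qed

lemma elementary_smooth_bump: "elementary_smooth (bump c r)"
proof -
  have "(\<lambda>x. r\<^sup>2 - (x - c) \<bullet> (x - c)) = (\<lambda>x. (r\<^sup>2 - c \<bullet> c) + ((x \<bullet> x) * (-1) + (x \<bullet> c) * 2))"
    by (auto simp: inner_diff_left inner_diff_right inner_commute algebra_simps)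
  moreover have "elementary_smooth (\<lambda>x. (r\<^sup>2 - c \<bullet> c) + ((x \<bullet> x) * (-1) + (x \<bullet> c) * 2))"
    by (intro elementary_smooth.intros)
  ultimately have "elementary_smooth (\<lambda>x. r\<^sup>2 - (x - c) \<bullet> (x - c))"
    by simp
  then show ?thesis
    unfolding bump_def[abs_def]
    by (rule elementary_smooth.compose[where h=bump_tower and n=0, OF bump_tower_has_real_derivative])
qed

lemma continuous_on_bump: "continuous_on UNIV (bump c r)"
  using elementary_smooth_bump elementary_smooth_imp_smooth_on smooth_on_UNIV_continuous_on by blast

lemma test_fun_scaled_bump:
  assumes "0 < r" "cball c r \<subseteq> \<Omega>"
  shows "test_fun \<Omega> (\<lambda>x. t * bump c r x)"
proof -
  have "{x. t * bump c r x \<noteq> 0} \<subseteq> ball c r"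
  proof
    fix x
    assume "x \<in> {x. t * bump c r x \<noteq> 0}"
    then show "x \<in> ball c r"
      using bump_eq[OF assms(1), of c x] by (cases "x \<in> ball c r") simp_all
  qed
  then have support: "closure {x. t * bump c r x \<noteq> 0} \<subseteq> cball c r"
    by (metis closure_mono closure_ball[OF assms(1)])
  have "bounded (closure {x. t * bump c r x \<noteq> 0})"
    by (rule bounded_subset[OF bounded_cball support])
  then have "compact (closure {x. t * bump c r x \<noteq> 0})"
    by (simp add: compact_eq_bounded_closed)
  moreover have "elementary_smooth (\<lambda>x. t * bump c r x)"
    by (intro elementary_smooth.mult elementary_smooth.const elementary_smooth_bump)
  ultimately show ?thesis
    unfolding test_fun_def
    using elementary_smooth_imp_smooth_on order_trans[OF support assms(2)] by simp
qed

lemma bump_powr_set_integral_pos: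
  assumes r: "0 < r" "cball c r \<subseteq> \<Omega>" and \<Omega>: "\<Omega> \<in> lmeasurable" and s: "0 \<le> s"
  shows "0 < (LINT x:\<Omega>|lebesgue. bump c r x powr s)"
proof -
  define \<delta> where "\<delta> = exp (- inverse (3 / 4 * r\<^sup>2))"
  have below: "indicator (ball c (r / 2)) x * \<delta> powr s \<le> indicator \<Omega> x *\<^sub>R bump c r x powr s" for x
  proof (cases "x \<in> ball c (r / 2)")
    case True
    then have "x \<in> \<Omega>"
      using r by auto
    moreover have "\<delta> powr s \<le> bump c r x powr s"
      unfolding \<delta>_def using bump_ge_on_half_ball[OF r(1) True] s by (intro powr_mono2) auto
    ultimately show ?thesis
      using True by simp
  qed (simp add: bump_nonneg)
  have integrable_bump: "integrable lebesgue (\<lambda>x. indicator \<Omega> x *\<^sub>R bump c r x powr s)"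
  proof (rule integrableI_bounded_set[where A=\<Omega> and B=1])
    show "\<Omega> \<in> sets lebesgue" "emeasure lebesgue \<Omega> < \<infinity>"
      using \<Omega> by (auto simp: fmeasurable_def)
    show "(\<lambda>x. indicator \<Omega> x *\<^sub>R bump c r x powr s) \<in> borel_measurable lebesgue"
      using \<open>\<Omega> \<in> sets lebesgue\<close> continuous_on_bump
      by (intro borel_measurable_scaleR borel_measurable_indicator powr_real_measurable
          continuous_on_imp_borel_measurable_lebesgue) auto
    have "bump c r x powr s \<le> 1 powr s" for x
      using bump_nonneg bump_le_one s by (intro powr_mono2) auto
    then show "AE x\<in>\<Omega> in lebesgue. norm (indicator \<Omega> x *\<^sub>R bump c r x powr s) \<le> 1"
      by (intro AE_I2) simp
  qed simp
  have "integrable lebesgue (\<lambda>x. indicator (ball c (r / 2)) x * \<delta> powr s)"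
    using lmeasurable_ball[of c "r / 2"]
    by (intro integrable_mult_left integrable_real_indicator) (auto simp: fmeasurable_def)
  then have "(LINT x|lebesgue. indicator (ball c (r / 2)) x * \<delta> powr s)
      \<le> (LINT x|lebesgue. indicator \<Omega> x *\<^sub>R bump c r x powr s)"
    using integrable_bump below by (rule integral_mono)
  moreover have "0 < measure lebesgue (ball c (r / 2))"
    using r(1) content_ball_gt_0_iff[of c "r / 2"] by simp
  then have "0 < (LINT x|lebesgue. indicator (ball c (r / 2)) x * \<delta> powr s)"
    by (simp add: \<delta>_def)
  ultimately show ?thesis
    unfolding set_lebesgue_integral_def by linarith
qed

lemma in_Lp_bounded:
  fixes f :: "'a::euclidean_space \<Rightarrow> real"
  assumes f: "f \<in> borel_measurable lebesgue" and \<Omega>: "\<Omega> \<in> lmeasurable"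
    and f_bound: "\<forall>x\<in>\<Omega>. \<bar>f x\<bar> \<le> B" and p_bounds: "\<forall>x\<in>\<Omega>. 0 \<le> p x \<and> p x \<le> P"
  shows "in_Lp p \<Omega> f"
proof -
  define M where "M = max 1 B powr P"
  have bound: "\<bar>f x\<bar> powr p x \<le> M" if "x \<in> \<Omega>" for x
  proof (cases "f x = 0")
    case False
    have "\<bar>f x\<bar> powr p x \<le> max 1 B powr p x"
      by (rule powr_mono2) (use that p_bounds f_bound in auto)
    also have "\<dots> \<le> M"
      unfolding M_def by (rule powr_mono) (use that p_bounds in auto)
    finally show ?thesis .
  qed (simp add: M_def)
  have "modular p \<Omega> f \<le> (\<integral>\<^sup>+x\<in>\<Omega>. ennreal M \<partial>lebesgue)"
    unfolding modular_def
    by (rule nn_integral_mono) (simp add: bound ennreal_leI split: split_indicator)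
  also have "\<dots> = ennreal M * emeasure lebesgue \<Omega>"
    using \<Omega> by (simp add: nn_integral_cmult_indicator)
  also have "\<dots> < \<infinity>"
    using fmeasurableD2[OF \<Omega>] ennreal_mult_less_top[of "ennreal M"] by (simp add: less_top)
  finally show ?thesis
    unfolding in_Lp_def using f by simp
qed

lemma lux_norm_zero: "lux_norm p \<Omega> (\<lambda>x. 0) = 0"
proof -
  have "{\<mu>. \<mu> > 0 \<and> modular p \<Omega> (\<lambda>x. 0 / \<mu>) \<le> 1} = {0<..}"
    by (auto simp: modular_def)
  then show ?thesis
    unfolding lux_norm_def by simp
qed

lemma continuous_on_bounded_on_bounded_set:
  fixes g :: "'a::euclidean_space \<Rightarrow> 'b::real_normed_vector"
  assumes "continuous_on UNIV g" "bounded S"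
  shows "\<exists>B. \<forall>x\<in>S. norm (g x) \<le> B"
proof -
  have "bounded (g ` closure S)"
    using assms by (intro compact_imp_bounded compact_continuous_image)
      (auto intro: continuous_on_subset simp: compact_closure)
  then have "bounded (g ` S)"
    by (rule bounded_subset) (use closure_subset in blast)
  then show ?thesis
    by (auto simp: bounded_iff)
qed

lemma test_fun_in_E:
  fixes \<phi> :: "'a::euclidean_space \<Rightarrow> real"
  assumes \<phi>: "test_fun \<Omega> \<phi>" and \<Omega>: "bounded \<Omega>" "open \<Omega>"
    and p_bounds: "\<forall>x\<in>\<Omega>. 0 \<le> p x \<and> p x \<le> P"
  shows "in_E p \<Omega> \<phi> (grad \<phi>)"
proof -
  have lmeas: "\<Omega> \<in> lmeasurable"
    using lmeasurable_open[OF \<Omega>] .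
  have smooth: "smooth_on UNIV \<phi>"
    using \<phi> unfolding test_fun_def by blast
  have cont: "continuous_on UNIV \<phi>"
    by (rule smooth_on_UNIV_continuous_on[OF smooth])
  have cont_grad: "continuous_on UNIV (grad \<phi>)"
    by (rule smooth_on_UNIV_continuous_on_grad[OF smooth])
  then have cont_norm_grad: "continuous_on UNIV (\<lambda>x. norm (grad \<phi> x))"
    by (rule continuous_on_norm)
  obtain B1 where B1: "\<forall>x\<in>\<Omega>. norm (\<phi> x) \<le> B1"
    using continuous_on_bounded_on_bounded_set[OF cont \<Omega>(1)] by blast
  obtain B2 where B2: "\<forall>x\<in>\<Omega>. norm (grad \<phi> x) \<le> B2"
    using continuous_on_bounded_on_bounded_set[OF cont_grad \<Omega>(1)] by blast
  have "in_Lp p \<Omega> \<phi>"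
    by (rule in_Lp_bounded[OF continuous_on_imp_borel_measurable_lebesgue[OF cont] lmeas _ p_bounds])
      (use B1 in simp)
  moreover have "in_Lp p \<Omega> (\<lambda>x. norm (grad \<phi> x))"
    by (rule in_Lp_bounded[OF continuous_on_imp_borel_measurable_lebesgue[OF cont_norm_grad]
          lmeas _ p_bounds])
      (use B2 in simp)
  ultimately show ?thesis
    unfolding in_E_def using \<phi> continuous_on_imp_borel_measurable_lebesgue[OF cont_grad]
    by (intro conjI exI[of _ "\<lambda>k. \<phi>"]) (auto simp: lux_norm_zero)
qed

lemma hoelder_continuous_bounded_above:
  fixes p :: "'a::metric_space \<Rightarrow> real"
  assumes S: "bounded S" and \<alpha>: "0 \<le> \<alpha>"
    and hoelder: "\<forall>x\<in>S. \<forall>y\<in>S. \<bar>p x - p y\<bar> \<le> C * dist x y powr \<alpha>"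
  shows "\<exists>P. \<forall>x\<in>S. p x \<le> P"
proof (cases "S = {}")
  case False
  then obtain y where y: "y \<in> S"
    by blast
  then obtain D where D: "\<forall>x\<in>S. dist y x \<le> D"
    using S bounded_any_center by blast
  have "p x \<le> p y + \<bar>C\<bar> * D powr \<alpha>" if x: "x \<in> S" for x
  proof -
    have "p x - p y \<le> C * dist x y powr \<alpha>"
      using hoelder x y by fastforce
    also have "\<dots> \<le> \<bar>C\<bar> * D powr \<alpha>"
      using D x \<alpha> by (intro mult_mono powr_mono2) (auto simp: dist_commute)
    finally show ?thesis
      by simp
  qed
  then show ?thesis
    by blast
qed simp

lemma set_integral_max_scaled_powr:
  fixes f :: "'a \<Rightarrow> real"
  assumes "0 < t" "\<And>x. 0 \<le> f x"
  shows "(LINT x:S|M. max (t * f x) 0 powr s) = t powr s * (LINT x:S|M. f x powr s)"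
proof -
  have "max (t * f x) 0 powr s = t powr s * f x powr s" for x
    using assms by (simp add: powr_mult)
  then show ?thesis
    by (simp add: set_lebesgue_integral_def)
qed

lemma I_fun_eventually_negative:
  assumes "(LINT x:\<Omega>|lebesgue. max (u x) 0 powr \<beta>) / \<beta>
      < (LINT x:\<Omega>|lebesgue. max (u x) 0 powr \<gamma>) / \<gamma>"
  shows "\<exists>lam_star>0. \<forall>lam\<ge>lam_star. I_fun A \<Omega> \<beta> \<gamma> lam u g < 0"
proof -
  define X where "X = (LINT x:\<Omega>|lebesgue. A x (g x))"
  define D where "D = (LINT x:\<Omega>|lebesgue. max (u x) 0 powr \<gamma>) / \<gamma>
      - (LINT x:\<Omega>|lebesgue. max (u x) 0 powr \<beta>) / \<beta>"
  have D: "0 < D"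
    using assms by (simp add: D_def)
  have I_fun: "I_fun A \<Omega> \<beta> \<gamma> lam u g = X - lam * D" for lam
    by (simp add: I_fun_def X_def D_def algebra_simps)
  have "I_fun A \<Omega> \<beta> \<gamma> lam u g < 0" if "(\<bar>X\<bar> + 1) / D \<le> lam" for lam
  proof -
    have "\<bar>X\<bar> + 1 \<le> lam * D"
      using that D by (simp add: pos_divide_le_eq)
    then show ?thesis
      unfolding I_fun by linarith
  qed
  then show ?thesis
    by (intro exI[of _ "max 1 ((\<bar>X\<bar> + 1) / D)"]) auto
qed

lemma ex_powr_larger_exponent_dominates:
  fixes a b \<beta> \<gamma> :: real
  assumes "0 < a" "0 \<le> b" "0 < \<beta>" "\<beta> < \<gamma>"
  shows "\<exists>t>0. t powr \<beta> * b / \<beta> < t powr \<gamma> * a / \<gamma>"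
proof -
  define t where "t = (b * \<gamma> / (a * \<beta>) + 1) powr (1 / (\<gamma> - \<beta>))"
  have base: "0 < b * \<gamma> / (a * \<beta>) + 1"
    using assms by (simp add: add_nonneg_pos)
  then have t: "0 < t"
    by (simp add: t_def)
  have "t powr (\<gamma> - \<beta>) = b * \<gamma> / (a * \<beta>) + 1"
    unfolding t_def using base assms by (simp add: powr_powr)
  then have "t powr \<gamma> = t powr \<beta> * (b * \<gamma> / (a * \<beta>) + 1)"
    using powr_add[of t \<beta> "\<gamma> - \<beta>"] by simp
  then have "t powr \<gamma> * a / \<gamma> - t powr \<beta> * b / \<beta> = t powr \<beta> * (a / \<gamma>)"
    using assms by (simp add: field_simps)
  also have "\<dots> > 0"
    using t assms by simp
  finally show ?thesis
    using t by auto
qed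

lemma ex_scaled_bump_gamma_term_dominates:
  assumes r: "0 < r" "cball c r \<subseteq> \<Omega>" and \<Omega>: "\<Omega> \<in> lmeasurable"
    and exps: "0 < \<beta>" "\<beta> < \<gamma>"
  shows "\<exists>t>0. (LINT x:\<Omega>|lebesgue. max (t * bump c r x) 0 powr \<beta>) / \<beta>
      < (LINT x:\<Omega>|lebesgue. max (t * bump c r x) 0 powr \<gamma>) / \<gamma>"
proof -
  define J where "J s = (LINT x:\<Omega>|lebesgue. bump c r x powr s)" for s
  have "0 < J \<gamma>" "0 < J \<beta>"
    unfolding J_def using bump_powr_set_integral_pos[OF r \<Omega>] exps by simp_all
  then obtain t where t: "0 < t" "t powr \<beta> * J \<beta> / \<beta> < t powr \<gamma> * J \<gamma> / \<gamma>"
    using ex_powr_larger_exponent_dominates[of "J \<gamma>" "J \<beta>" \<beta> \<gamma>] exps by force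
  then show ?thesis
    by (intro exI[of _ t]) (simp add: J_def set_integral_max_scaled_powr[OF t(1) bump_nonneg])
qed

theorem proposition3:
  fixes \<Omega> :: "'a::euclidean_space set"
    and p :: "'a \<Rightarrow> real" and \<alpha> :: real
    and A :: "'a \<Rightarrow> 'a \<Rightarrow> real" and a :: "'a \<Rightarrow> 'a \<Rightarrow> 'a"
    and c1 k \<beta> \<gamma> :: real
  assumes dim: "DIM('a) \<ge> 3"
    and dom: "smooth_bounded_domain \<Omega>"
    and alpha: "0 < \<alpha>" "\<alpha> < 1"
    and p_hoelder: "\<exists>C. \<forall>x\<in>closure \<Omega>. \<forall>y\<in>closure \<Omega>. \<bar>p x - p y\<bar> \<le> C * dist x y powr \<alpha>"
    and p_gt1: "\<forall>x\<in>closure \<Omega>. p x > 1"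
    and A_deriv: "\<forall>x\<in>closure \<Omega>. \<forall>\<xi>. (A x has_derivative (\<lambda>h. a x \<xi> \<bullet> h)) (at \<xi>)"
    and a_cont: "continuous_on (closure \<Omega> \<times> UNIV) (\<lambda>(x, \<xi>). a x \<xi>)"
    and A1: "\<forall>x\<in>closure \<Omega>. A x 0 = 0"
    and A2: "c1 > 0" "\<forall>x\<in>closure \<Omega>. \<forall>\<xi>. norm (a x \<xi>) \<le> c1 * (1 + norm \<xi> powr (p x - 1))"
    and A3: "\<forall>x\<in>closure \<Omega>. \<forall>\<xi> \<psi>. (a x \<xi> - a x \<psi>) \<bullet> (\<xi> - \<psi>) \<ge> 0 \<and>
               ((a x \<xi> - a x \<psi>) \<bullet> (\<xi> - \<psi>) = 0 \<longleftrightarrow> \<xi> = \<psi>)"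
    and A4: "k > 0" "\<forall>x\<in>closure \<Omega>. \<forall>\<xi> \<psi>.
               A x ((\<xi> + \<psi>) /\<^sub>R 2) \<le> A x \<xi> / 2 + A x \<psi> / 2 - k * norm (\<xi> - \<psi>) powr p x"
    and A5: "\<forall>x\<in>closure \<Omega>. \<forall>\<xi>. norm \<xi> powr p x \<le> a x \<xi> \<bullet> \<xi> \<and> a x \<xi> \<bullet> \<xi> \<le> p x * A x \<xi>"
    and exps: "1 < \<beta>" "\<beta> < \<gamma>" "\<gamma> < Inf (p ` \<Omega>)"
  shows "\<exists>lam_star>0. \<forall>lam\<ge>lam_star. \<exists>u g. in_E p \<Omega> u g \<and> I_fun A \<Omega> \<beta> \<gamma> lam u g < 0"
proof -
  from dom have \<Omega>: "\<Omega> \<noteq> {}" "bounded \<Omega>" "open \<Omega>"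
    unfolding smooth_bounded_domain_def by auto
  then obtain c r where r: "0 < r" "cball c r \<subseteq> \<Omega>"
    using open_contains_cball by blast
  obtain C where "\<forall>x\<in>closure \<Omega>. \<forall>y\<in>closure \<Omega>. \<bar>p x - p y\<bar> \<le> C * dist x y powr \<alpha>"
    using p_hoelder by blast
  then obtain P where P: "\<forall>x\<in>closure \<Omega>. p x \<le> P"
    using hoelder_continuous_bounded_above[OF bounded_closure[OF \<Omega>(2)] less_imp_le[OF alpha(1)]]
    by blast
  have p_bounds: "\<forall>x\<in>\<Omega>. 0 \<le> p x \<and> p x \<le> P"
    using P p_gt1 closure_subset by (meson less_imp_le less_trans subsetD zero_less_one)
  obtain t where "0 < t" and gap: "(LINT x:\<Omega>|lebesgue. max (t * bump c r x) 0 powr \<beta>) / \<beta>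
      < (LINT x:\<Omega>|lebesgue. max (t * bump c r x) 0 powr \<gamma>) / \<gamma>"
    using ex_scaled_bump_gamma_term_dominates[OF r lmeasurable_open[OF \<Omega>(2,3)]
        less_trans[OF zero_less_one exps(1)] exps(2)] by blast
  define u where "u x = t * bump c r x" for x
  have "in_E p \<Omega> u (grad u)"
    unfolding u_def[abs_def] by (rule test_fun_in_E[OF test_fun_scaled_bump[OF r] \<Omega>(2,3) p_bounds])
  moreover obtain lam_star where "0 < lam_star" "\<forall>lam\<ge>lam_star. I_fun A \<Omega> \<beta> \<gamma> lam u (grad u) < 0"
    using I_fun_eventually_negative[OF gap[folded u_def]] by blast
  ultimately show ?thesis
    by blast
qed

end
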